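(* Let $L>0$, $g\in L^2((0,L)^2;\mathbb{C})$, and let $P:L^2(0,L)\to L^2(0,L)$ be a bounded linear operator such that $P^*(D(A^* ))\subset D(A^* )$ and $A_0^*P^*z-P^*A^*z=0$ for all $z\in\ker B^*$. Then $\ker P^*=\{0\}$ if and only if the following four conditions hold: (i) $\ker P^*\subset D(A^* )$; (ii) $\ker P^*\subset\ker B^*$; (iii) $\dim\ker P^*<+\infty$; (iv) $\ker(\lambda-A^* )\cap\ker B^*=\{0\}$ for every $\lambda\in\mathbb{C}$.
   Context: $D(A^* )=\{z\in H^1(0,L):z(0)=0\}$; $A^*z(x)=-z'(x)+\int_0^L\overline{g(y,x)}z(y)dy$ and $A_0^*z=-z'$, both with domain $D(A^* )$; $B^*:D(A^* )\to\mathbb{C}$, $B^*z=z(L)$. *)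

theory Defs
  imports "HOL-Analysis.Analysis"
begin

text \<open>Elements of L^2(0,L;C) are represented by functions real => complex;
  equality in L^2 is equality almost everywhere on (0,L).\<close>

definition L2 :: "real \<Rightarrow> (real \<Rightarrow> complex) set" where
  "L2 L = {f. f \<in> borel_measurable lborel \<and>
              set_integrable lborel {0<..<L} (\<lambda>x. (cmod (f x))\<^sup>2)}"

definition aeq :: "real \<Rightarrow> (real \<Rightarrow> complex) \<Rightarrow> (real \<Rightarrow> complex) \<Rightarrow> bool" where
  "aeq L f g \<longleftrightarrow> (AE x in lborel. x \<in> {0<..<L} \<longrightarrow> f x = g x)"

definition l2inner :: "real \<Rightarrow> (real \<Rightarrow> complex) \<Rightarrow> (real \<Rightarrow> complex) \<Rightarrow> complex" where
  "l2inner L f g = (LINT x:{0<..<L}|lborel. f x * cnj (g x))"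

definition l2norm :: "real \<Rightarrow> (real \<Rightarrow> complex) \<Rightarrow> real" where
  "l2norm L f = sqrt (LINT x:{0<..<L}|lborel. (cmod (f x))\<^sup>2)"

definition bounded_op :: "real \<Rightarrow> ((real \<Rightarrow> complex) \<Rightarrow> (real \<Rightarrow> complex)) \<Rightarrow> bool" where
  "bounded_op L P \<longleftrightarrow>
     (\<forall>f\<in>L2 L. P f \<in> L2 L) \<and>
     (\<forall>f\<in>L2 L. \<forall>g\<in>L2 L. aeq L f g \<longrightarrow> aeq L (P f) (P g)) \<and>
     (\<forall>f\<in>L2 L. \<forall>g\<in>L2 L. \<forall>a b::complex.
        aeq L (P (\<lambda>x. a * f x + b * g x)) (\<lambda>x. a * P f x + b * P g x)) \<and>
     (\<exists>C. \<forall>f\<in>L2 L. l2norm L (P f) \<le> C * l2norm L f)"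

definition is_adjoint :: "real \<Rightarrow> ((real \<Rightarrow> complex) \<Rightarrow> (real \<Rightarrow> complex))
    \<Rightarrow> ((real \<Rightarrow> complex) \<Rightarrow> (real \<Rightarrow> complex)) \<Rightarrow> bool" where
  "is_adjoint L P Ps \<longleftrightarrow>
     (\<forall>g\<in>L2 L. Ps g \<in> L2 L \<and> (\<forall>f\<in>L2 L. l2inner L (P f) g = l2inner L f (Ps g)))"

text \<open>z has an H^1 representative with zero value at 0 and derivative w:
  z(x) = int_0^x w a.e. on (0,L), with w in L^2.\<close>
definition is_deriv0 :: "real \<Rightarrow> (real \<Rightarrow> complex) \<Rightarrow> (real \<Rightarrow> complex) \<Rightarrow> bool" where
  "is_deriv0 L z w \<longleftrightarrow> w \<in> L2 L \<and>
     (AE x in lborel. x \<in> {0<..<L} \<longrightarrow> z x = (LINT t:{0..x}|lborel. w t))"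

text \<open>D(A^*) = {z in H^1(0,L) : z(0) = 0}.\<close>
definition DAs :: "real \<Rightarrow> (real \<Rightarrow> complex) \<Rightarrow> bool" where
  "DAs L z \<longleftrightarrow> z \<in> L2 L \<and> (\<exists>w. is_deriv0 L z w)"

definition dz :: "real \<Rightarrow> (real \<Rightarrow> complex) \<Rightarrow> (real \<Rightarrow> complex)" where
  "dz L z = (SOME w. is_deriv0 L z w)"

text \<open>B^* z = z(L) (value of the continuous representative).\<close>
definition Bs :: "real \<Rightarrow> (real \<Rightarrow> complex) \<Rightarrow> complex" where
  "Bs L z = (LINT t:{0..L}|lborel. dz L z t)"

definition As :: "real \<Rightarrow> (real \<Rightarrow> real \<Rightarrow> complex) \<Rightarrow> (real \<Rightarrow> complex) \<Rightarrow> (real \<Rightarrow> complex)" where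
  "As L g z = (\<lambda>x. - dz L z x + (LINT y:{0<..<L}|lborel. cnj (g y x) * z y))"

definition A0s :: "real \<Rightarrow> (real \<Rightarrow> complex) \<Rightarrow> (real \<Rightarrow> complex)" where
  "A0s L z = (\<lambda>x. - dz L z x)"

definition kerBs :: "real \<Rightarrow> (real \<Rightarrow> complex) set" where
  "kerBs L = {z. DAs L z \<and> Bs L z = 0}"

definition kerop :: "real \<Rightarrow> ((real \<Rightarrow> complex) \<Rightarrow> (real \<Rightarrow> complex)) \<Rightarrow> (real \<Rightarrow> complex) set" where
  "kerop L Q = {z \<in> L2 L. aeq L (Q z) (\<lambda>_. 0)}"

definition fin_dim :: "real \<Rightarrow> (real \<Rightarrow> complex) set \<Rightarrow> bool" where
  "fin_dim L S \<longleftrightarrow> (\<exists>F. finite F \<and> F \<subseteq> S \<and>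
     (\<forall>z\<in>S. \<exists>c. aeq L z (\<lambda>x. \<Sum>f\<in>F. c f * f x)))"

end

(* If z \<in> ker B\<^sup>* satisfies A\<^sup>* z = \<lambda> z, the intertwining relation makes w = P\<^sup>* z a solution
   of w' = -\<lambda> w with w(0) = 0, hence w = 0; so a trivial kernel of P\<^sup>* excludes such eigenvectors,
   and (i)-(iii) hold trivially.
   Conversely, ker P\<^sup>* is invariant under A\<^sup>* because A\<^sub>0\<^sup>* P\<^sup>* vanishes on it. If it is finite
   dimensional, every y in it is annihilated by p(A\<^sup>* ) for some nonzero polynomial p. Writing
   p = (X - a) q, the vector q(A\<^sup>* ) y lies in ker B\<^sup>* and is an eigenvector of A\<^sup>* unless it
   vanishes; by (iv) it vanishes, and induction on the degree gives y = 0. *)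

theory Submission
  imports Defs "HOL-Library.Function_Algebras"
    "HOL-Computational_Algebra.Fundamental_Theorem_Algebra"
begin

lemma le_one_plus_square: "(t::real) \<le> 1 + t\<^sup>2"
  using sum_squares_bound[of t 1] zero_le_power2[of t] by (simp only: mult_1_right power_one)

lemma mult_le_sum_squares: "(s::real) * t \<le> s\<^sup>2 + t\<^sup>2"
  using sum_squares_bound[of s t] zero_le_power2[of s] zero_le_power2[of t]
  by (simp only: mult.assoc)

lemma square_sum_le: "((s::real) + t)\<^sup>2 \<le> 2 * s\<^sup>2 + 2 * t\<^sup>2"
  using sum_squares_bound[of s t] by (simp add: power2_sum)

lemma borel_measurable_cnj [measurable]:
  "f \<in> borel_measurable M \<Longrightarrow> (\<lambda>x. cnj (f x :: complex)) \<in> borel_measurable M"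
  by (rule borel_measurable_continuous_on[where f=cnj]) (auto intro: continuous_on_cnj continuous_on_id)

lemma L2_measurable: "f \<in> L2 L \<Longrightarrow> f \<in> borel_measurable lborel"
  by (simp add: L2_def)

lemma L2_square_integrable: "f \<in> L2 L \<Longrightarrow> set_integrable lborel {0<..<L} (\<lambda>x. (cmod (f x))\<^sup>2)"
  by (simp add: L2_def)

lemma L2_zero: "(\<lambda>_. 0) \<in> L2 L"
  by (simp add: L2_def set_integrable_def)

lemma L2_cnj: "z \<in> L2 L \<Longrightarrow> (\<lambda>x. cnj (z x)) \<in> L2 L"
  unfolding L2_def by auto

lemma set_integrable_one_Ioo: "set_integrable lborel {0<..<(L::real)} (\<lambda>_. 1::real)"
proof -
  have "emeasure lborel {0<..<L} < \<infinity>"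
    by (cases "0 \<le> L") (simp_all add: ennreal_less_top)
  then show ?thesis
    by (simp add: set_integrable_def integrable_indicator_iff)
qed

lemma L2_set_integrable:
  assumes "f \<in> L2 L"
  shows "set_integrable lborel {0<..<L} f"
proof (rule set_integrable_bound[where f="\<lambda>x. 1 + (cmod (f x))\<^sup>2"])
  show "set_integrable lborel {0<..<L} (\<lambda>x. 1 + (cmod (f x))\<^sup>2)"
    using set_integrable_one_Ioo L2_square_integrable[OF assms] by (rule set_integral_add)
  show "set_borel_measurable lborel {0<..<L} f"
    using L2_measurable[OF assms] by (simp add: set_borel_measurable_def)
  show "AE x in lborel. x \<in> {0<..<L} \<longrightarrow> norm (f x) \<le> norm (1 + (cmod (f x))\<^sup>2)"
    using le_one_plus_square by simp
qed

lemma L2_set_integrable_subinterval: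
  assumes "f \<in> L2 L" "0 \<le> a" "b \<le> L"
  shows "set_integrable lborel {a..b} f"
proof -
  have "set_integrable lborel {0..L} f"
    using L2_set_integrable[OF assms(1)]
    by (subst set_integrable_discrete_difference[where X="{0, L}"]) auto
  then show ?thesis
    by (rule set_integrable_subset) (use assms in auto)
qed

lemma L2_lincomb:
  assumes "f \<in> L2 L" "g \<in> L2 L"
  shows "(\<lambda>x. a * f x + b * g x) \<in> L2 L"
proof -
  have meas: "(\<lambda>x. a * f x + b * g x) \<in> borel_measurable lborel"
    using L2_measurable[OF assms(1)] L2_measurable[OF assms(2)] by simp
  have bound: "(cmod (a * f x + b * g x))\<^sup>2 \<le> 2 * (cmod a * cmod (f x))\<^sup>2 + 2 * (cmod b * cmod (g x))\<^sup>2"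
    for x
  proof -
    have "cmod (a * f x + b * g x) \<le> cmod a * cmod (f x) + cmod b * cmod (g x)"
      by (metis norm_mult norm_triangle_ineq)
    then have "(cmod (a * f x + b * g x))\<^sup>2 \<le> (cmod a * cmod (f x) + cmod b * cmod (g x))\<^sup>2"
      by (simp add: power_mono)
    then show ?thesis
      using square_sum_le by (rule order_trans)
  qed
  have "set_integrable lborel {0<..<L} (\<lambda>x. (cmod (a * f x + b * g x))\<^sup>2)"
  proof (rule set_integrable_bound)
    show "set_integrable lborel {0<..<L}
        (\<lambda>x. 2 * (cmod a * cmod (f x))\<^sup>2 + 2 * (cmod b * cmod (g x))\<^sup>2)"
      using L2_square_integrable[OF assms(1)] L2_square_integrable[OF assms(2)]
      by (simp add: power_mult_distrib)
    show "set_borel_measurable lborel {0<..<L} (\<lambda>x. (cmod (a * f x + b * g x))\<^sup>2)"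
      using meas unfolding set_borel_measurable_def by simp
    show "AE x in lborel. x \<in> {0<..<L} \<longrightarrow> norm ((cmod (a * f x + b * g x))\<^sup>2)
        \<le> norm (2 * (cmod a * cmod (f x))\<^sup>2 + 2 * (cmod b * cmod (g x))\<^sup>2)"
      using bound by simp
  qed
  with meas show ?thesis
    by (simp add: L2_def)
qed

lemma L2_mult_cnj_set_integrable:
  assumes "f \<in> L2 L" "g \<in> L2 L"
  shows "set_integrable lborel {0<..<L} (\<lambda>x. f x * cnj (g x))"
proof (rule set_integrable_bound)
  show "set_integrable lborel {0<..<L} (\<lambda>x. (cmod (f x))\<^sup>2 + (cmod (g x))\<^sup>2)"
    using L2_square_integrable[OF assms(1)] L2_square_integrable[OF assms(2)]
    by (rule set_integral_add)
  show "set_borel_measurable lborel {0<..<L} (\<lambda>x. f x * cnj (g x))"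
    using L2_measurable[OF assms(1)] L2_measurable[OF assms(2)]
    unfolding set_borel_measurable_def by measurable
  have "cmod (f x) * cmod (g x) \<le> (cmod (f x))\<^sup>2 + (cmod (g x))\<^sup>2" for x
    by (rule mult_le_sum_squares)
  then show "AE x in lborel. x \<in> {0<..<L} \<longrightarrow>
      norm (f x * cnj (g x)) \<le> norm ((cmod (f x))\<^sup>2 + (cmod (g x))\<^sup>2)"
    by (simp add: norm_mult)
qed

lemma aeq_refl: "aeq L f f"
  by (simp add: aeq_def)

lemma aeq_sym: "aeq L f g \<Longrightarrow> aeq L g f"
  unfolding aeq_def by (auto elim: AE_mp)

lemma aeq_trans [trans]:
  assumes "aeq L f g" "aeq L g h"
  shows "aeq L f h"
  using assms unfolding aeq_def by eventually_elim auto

lemma aeq_lincomb: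
  assumes "aeq L f f'" "aeq L g g'"
  shows "aeq L (\<lambda>x. a * f x + b * g x) (\<lambda>x. a * f' x + b * g' x)"
  using assms unfolding aeq_def by eventually_elim auto

lemma aeq_sum:
  assumes "finite A" "\<And>i. i \<in> A \<Longrightarrow> aeq L (f i) (h i)"
  shows "aeq L (\<lambda>x. \<Sum>i\<in>A. c i * f i x) (\<lambda>x. \<Sum>i\<in>A. c i * h i x)"
proof -
  have "AE x in lborel. \<forall>i\<in>A. x \<in> {0<..<L} \<longrightarrow> f i x = h i x"
    using assms unfolding aeq_def by (subst AE_finite_all) auto
  then show ?thesis
    unfolding aeq_def by eventually_elim auto
qed

lemma l2inner_lincomb_right:
  assumes "f \<in> L2 L" "g \<in> L2 L" "h \<in> L2 L"
  shows "l2inner L h (\<lambda>x. a * f x + b * g x) = cnj a * l2inner L h f + cnj b * l2inner L h g"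
proof -
  have "l2inner L h (\<lambda>x. a * f x + b * g x)
      = (LINT x:{0<..<L}|lborel. cnj a * (h x * cnj (f x)) + cnj b * (h x * cnj (g x)))"
    unfolding l2inner_def by (simp add: algebra_simps)
  also have "\<dots> = cnj a * l2inner L h f + cnj b * l2inner L h g"
    using L2_mult_cnj_set_integrable[OF assms(3,1)] L2_mult_cnj_set_integrable[OF assms(3,2)]
    unfolding l2inner_def by (subst set_integral_add) auto
  finally show ?thesis .
qed

lemma l2inner_cong_right:
  assumes "aeq L f g" "f \<in> L2 L" "g \<in> L2 L" "h \<in> L2 L"
  shows "l2inner L h f = l2inner L h g"
  unfolding l2inner_def
proof (rule set_lebesgue_integral_cong_AE)
  show "(\<lambda>x. h x * cnj (f x)) \<in> borel_measurable lborel" "(\<lambda>x. h x * cnj (g x)) \<in> borel_measurable lborel"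
    using L2_measurable[OF assms(2)] L2_measurable[OF assms(3)] L2_measurable[OF assms(4)] by simp_all
  show "AE x\<in>{0<..<L} in lborel. h x * cnj (f x) = h x * cnj (g x)"
    using assms(1) unfolding aeq_def by eventually_elim auto
qed simp

lemma aeq_0_if_l2inner_self_eq_0:
  assumes "h \<in> L2 L" "l2inner L h h = 0"
  shows "aeq L h (\<lambda>_. 0)"
proof -
  have "l2inner L h h = (LINT x:{0<..<L}|lborel. complex_of_real ((cmod (h x))\<^sup>2))"
    unfolding l2inner_def
    by (rule set_lebesgue_integral_cong)
       (auto simp: complex_norm_square[symmetric] simp del: of_real_power)
  also have "\<dots> = complex_of_real (LINT x:{0<..<L}|lborel. (cmod (h x))\<^sup>2)"
    by (rule set_integral_complex_of_real)
  finally have "(LINT x|lborel. indicator {0<..<L} x * (cmod (h x))\<^sup>2) = 0"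
    using assms(2) by (simp add: set_lebesgue_integral_def)
  moreover have "integrable lborel (\<lambda>x. indicator {0<..<L} x * (cmod (h x))\<^sup>2)"
    using L2_square_integrable[OF assms(1)] by (simp add: set_integrable_def)
  ultimately have "AE x in lborel. indicator {0<..<L} x * (cmod (h x))\<^sup>2 = 0"
    by (subst (asm) integral_nonneg_eq_0_iff_AE) auto
  then show ?thesis
    unfolding aeq_def by eventually_elim (auto simp: indicator_def)
qed

lemma aeq_if_l2inner_eq:
  assumes "u \<in> L2 L" "v \<in> L2 L" "\<And>h. h \<in> L2 L \<Longrightarrow> l2inner L h u = l2inner L h v"
  shows "aeq L u v"
proof -
  define h where "h = (\<lambda>x. 1 * u x + (-1) * v x)"
  have h: "h \<in> L2 L"
    unfolding h_def by (rule L2_lincomb[OF assms(1,2)])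
  have "l2inner L h h = l2inner L h u - l2inner L h v"
    using l2inner_lincomb_right[OF assms(1,2) h, of 1 "-1"] by (simp add: h_def)
  also have "\<dots> = 0"
    using assms(3)[OF h] by simp
  finally have "aeq L h (\<lambda>_. 0)"
    by (rule aeq_0_if_l2inner_self_eq_0[OF h])
  then show ?thesis
    unfolding aeq_def h_def by eventually_elim auto
qed

lemma adjoint_L2: "is_adjoint L P Ps \<Longrightarrow> f \<in> L2 L \<Longrightarrow> Ps f \<in> L2 L"
  by (simp add: is_adjoint_def)

lemma bounded_op_L2: "bounded_op L P \<Longrightarrow> f \<in> L2 L \<Longrightarrow> P f \<in> L2 L"
  by (simp add: bounded_op_def)

lemma adjoint_cong:
  assumes P: "bounded_op L P" and Ps: "is_adjoint L P Ps"
    and f: "f \<in> L2 L" and g: "g \<in> L2 L" and fg: "aeq L f g"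
  shows "aeq L (Ps f) (Ps g)"
proof (rule aeq_if_l2inner_eq)
  show "Ps f \<in> L2 L" "Ps g \<in> L2 L"
    using Ps f g by (simp_all add: adjoint_L2)
  fix h assume h: "h \<in> L2 L"
  have "l2inner L h (Ps f) = l2inner L (P h) f"
    using Ps f h by (simp add: is_adjoint_def)
  also have "\<dots> = l2inner L (P h) g"
    by (rule l2inner_cong_right[OF fg f g bounded_op_L2[OF P h]])
  also have "\<dots> = l2inner L h (Ps g)"
    using Ps g h by (simp add: is_adjoint_def)
  finally show "l2inner L h (Ps f) = l2inner L h (Ps g)" .
qed

lemma adjoint_lincomb:
  assumes P: "bounded_op L P" and Ps: "is_adjoint L P Ps" and f: "f \<in> L2 L" and g: "g \<in> L2 L"
  shows "aeq L (Ps (\<lambda>x. a * f x + b * g x)) (\<lambda>x. a * Ps f x + b * Ps g x)"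
proof (rule aeq_if_l2inner_eq)
  have fg: "(\<lambda>x. a * f x + b * g x) \<in> L2 L"
    by (rule L2_lincomb[OF f g])
  have Psfg: "Ps f \<in> L2 L" "Ps g \<in> L2 L"
    using Ps f g by (simp_all add: adjoint_L2)
  show "Ps (\<lambda>x. a * f x + b * g x) \<in> L2 L" "(\<lambda>x. a * Ps f x + b * Ps g x) \<in> L2 L"
    using adjoint_L2[OF Ps fg] L2_lincomb[OF Psfg] .
  fix h assume h: "h \<in> L2 L"
  have "l2inner L h (Ps (\<lambda>x. a * f x + b * g x)) = l2inner L (P h) (\<lambda>x. a * f x + b * g x)"
    using Ps fg h by (simp add: is_adjoint_def)
  also have "\<dots> = cnj a * l2inner L (P h) f + cnj b * l2inner L (P h) g"
    by (rule l2inner_lincomb_right[OF f g bounded_op_L2[OF P h]])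
  also have "\<dots> = cnj a * l2inner L h (Ps f) + cnj b * l2inner L h (Ps g)"
    using Ps f g h by (simp add: is_adjoint_def)
  also have "\<dots> = l2inner L h (\<lambda>x. a * Ps f x + b * Ps g x)"
    by (rule l2inner_lincomb_right[OF Psfg h, symmetric])
  finally show "l2inner L h (Ps (\<lambda>x. a * f x + b * g x)) = l2inner L h (\<lambda>x. a * Ps f x + b * Ps g x)" .
qed

section \<open>Indefinite integrals\<close>

lemma L2_indefinite_integral_continuous:
  assumes "f \<in> L2 L"
  shows "continuous_on {0..L} (\<lambda>x. LINT t:{0..x}|lborel. f t)"
proof (rule continuous_on_eq)
  have "f integrable_on {0..L}"
    using set_borel_integral_eq_integral(1)[OF L2_set_integrable_subinterval[OF assms order_refl order_refl]] .
  then show "continuous_on {0..L} (\<lambda>x. integral {0..x} f)"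
    by (rule indefinite_integral_continuous_1)
  show "integral {0..x} f = (LINT t:{0..x}|lborel. f t)" if "x \<in> {0..L}" for x
    using set_borel_integral_eq_integral(2)[OF L2_set_integrable_subinterval[OF assms]] that by auto
qed

lemma continuous_on_eq_0_if_AE_eq_0:
  fixes F :: "real \<Rightarrow> 'a::t1_space"
  assumes "0 < L" and F: "continuous_on {0..L} F"
    and ae: "AE x in lborel. x \<in> {0<..<L} \<longrightarrow> F x = c"
    and x: "x \<in> {0..L}"
  shows "F x = c"
proof -
  define C where "C = {y \<in> {0..L}. F y = c}"
  have C: "closed C"
    unfolding C_def using F by (rule continuous_closed_preimage_constant) simp
  have "AE y \<in> {0<..<L} in lebesgue. y \<in> C"
    using AE_completion[OF ae] by eventually_elim (auto simp: C_def)
  then have "{0<..<L} \<subseteq> C"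
    using mem_closed_if_AE_lebesgue_open[OF open_greaterThanLessThan C] by blast
  then have "closure {0<..<L} \<subseteq> C"
    using C by (rule closure_minimal)
  with \<open>0 < L\<close> x show ?thesis
    by (auto simp: C_def)
qed

text \<open>The half-lines generate the Borel sets, so a Dynkin argument spreads the vanishing of the
  integrals to all Borel sets.\<close>

lemma AE_eq_0_if_set_integrals_atMost_eq_0:
  fixes f :: "real \<Rightarrow> 'b::{banach, second_countable_topology}"
  assumes f: "integrable lborel f" and bounded: "\<And>x. b < x \<Longrightarrow> f x = 0"
    and atMost: "\<And>a. (LINT x:{..a}|lborel. f x) = 0"
  shows "AE x in lborel. f x = 0"
proof (rule sigma_finite_measure.density_zero[OF sigma_finite_lborel f])
  have total: "integral\<^sup>L lborel f = 0"
  proof -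
    have "integral\<^sup>L lborel f = (LINT x:{..b}|lborel. f x)"
      unfolding set_lebesgue_integral_def
      by (intro Bochner_Integration.integral_cong) (auto simp: indicator_def bounded)
    then show ?thesis
      using atMost by simp
  qed
  have gen: "sets borel = sigma_sets UNIV (range (\<lambda>a. {..a::real}))"
    by (subst borel_eq_atMost) (rule sets_measure_of, simp)
  have stable: "Int_stable (range (\<lambda>a. {..a::real}))"
    by (auto simp: Int_stable_def Int_atMost)
  have sub: "range (\<lambda>a. {..a::real}) \<subseteq> Pow UNIV"
    by simp
  fix A :: "real set" assume "A \<in> sets lborel"
  with gen have "A \<in> sigma_sets UNIV (range (\<lambda>a. {..a::real}))"
    by simp
  with stable sub show "(LINT x:A|lborel. f x) = 0"
  proof (induction rule: sigma_sets_induct_disjoint)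
    case (basic A)
    then show ?case
      using atMost by auto
  next
    case empty
    then show ?case
      by (simp add: set_lebesgue_integral_def)
  next
    case (compl A)
    then have "A \<in> sets borel"
      using gen by simp
    have "(LINT x:(UNIV - A)|lborel. f x) = (LINT x|lborel. f x - indicator A x *\<^sub>R f x)"
      unfolding set_lebesgue_integral_def
      by (intro Bochner_Integration.integral_cong) (auto simp: indicator_def)
    also have "\<dots> = integral\<^sup>L lborel f - (LINT x:A|lborel. f x)"
      unfolding set_lebesgue_integral_def using f \<open>A \<in> sets borel\<close>
      by (intro Bochner_Integration.integral_diff integrable_mult_indicator) auto
    finally show ?case
      using total compl.IH by simp
  next
    case (union A)
    then have "A i \<in> sets borel" for i
      using gen by auto
    then have "(LINT x:(\<Union>i. A i)|lborel. f x) = (\<Sum>i. (LINT x:(A i)|lborel. f x))"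
      using union.hyps(1) f
      by (intro lebesgue_integral_countable_add)
         (auto simp: disjoint_family_on_def set_integrable_def intro!: integrable_mult_indicator)
    then show ?case
      using union.IH by simp
  qed
qed

lemma aeq_0_if_indefinite_integral_AE_eq_0:
  assumes "0 < L" and w: "w \<in> L2 L"
    and ae: "AE x in lborel. x \<in> {0<..<L} \<longrightarrow> (LINT t:{0..x}|lborel. w t) = 0"
  shows "aeq L w (\<lambda>_. 0)"
proof -
  have F0: "(LINT t:{0..x}|lborel. w t) = 0" if "x \<in> {0..L}" for x
    using continuous_on_eq_0_if_AE_eq_0[OF \<open>0 < L\<close> L2_indefinite_integral_continuous[OF w] ae that] .
  define f where "f = (\<lambda>x. indicator {0<..<L} x *\<^sub>R w x)"
  have "(LINT x:{..a}|lborel. f x) = 0" for a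
  proof -
    have "(LINT x:{..a}|lborel. f x) = (LINT x:({..a} \<inter> {0<..<L})|lborel. w x)"
      unfolding f_def set_lebesgue_integral_def by (simp add: indicator_inter_arith)
    also have "\<dots> = 0"
    proof (cases "a \<le> 0")
      case True
      then have "{..a} \<inter> {0<..<L} = {}"
        by auto
      then show ?thesis
        by (simp add: set_lebesgue_integral_def)
    next
      case False
      have "(LINT x:({..a} \<inter> {0<..<L})|lborel. w x) = (LINT x:{0..min a L}|lborel. w x)"
        by (rule set_integral_discrete_difference[where X="{0, a, L}"]) (auto simp: min_def)
      also have "\<dots> = 0"
        using False \<open>0 < L\<close> by (intro F0) auto
      finally show ?thesis .
    qed
    finally show ?thesis .
  qed
  moreover have "integrable lborel f"
    using L2_set_integrable[OF w] unfolding f_def set_integrable_def .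
  ultimately have "AE x in lborel. f x = 0"
    by (intro AE_eq_0_if_set_integrals_atMost_eq_0[where b=L]) (auto simp: f_def)
  then show ?thesis
    unfolding aeq_def f_def by eventually_elim (auto simp: indicator_def)
qed

text \<open>Gronwall in its simplest form: \<open>exp (-c t) F t\<close> has derivative zero.\<close>

lemma linear_integral_equation_eq_0:
  fixes F :: "real \<Rightarrow> complex"
  assumes F: "continuous_on {0..L} F"
    and eq: "\<And>y. y \<in> {0..L} \<Longrightarrow> F y = integral {0..y} (\<lambda>t. c * F t)"
    and x: "x \<in> {0..L}"
  shows "F x = 0"
proof -
  have cF: "continuous_on {0..L} (\<lambda>t. c * F t)"
    by (intro continuous_intros F)
  have F': "(F has_vector_derivative c * F y) (at y within {0..L})" if y: "y \<in> {0..L}" for y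
    using integral_has_vector_derivative[OF cF y]
    by (rule has_vector_derivative_transform_within[where d=1, OF _ _ y]) (simp, metis eq)
  define H where "H y = exp (y *\<^sub>R (- c)) * F y" for y
  have "\<exists>k. \<forall>y\<in>{0..L}. H y = k"
  proof (rule has_derivative_zero_constant)
    fix y assume y: "y \<in> {0..L}"
    have "(H has_vector_derivative
        exp (y *\<^sub>R (- c)) * (c * F y) + exp (y *\<^sub>R (- c)) * (- c) * F y) (at y within {0..L})"
      unfolding H_def by (intro has_vector_derivative_mult exp_scaleR_has_vector_derivative_right F' y)
    then show "(H has_derivative (\<lambda>_. 0)) (at y within {0..L})"
      by (simp add: has_vector_derivative_def algebra_simps)
  qed simp
  then obtain k where k: "\<And>y. y \<in> {0..L} \<Longrightarrow> H y = k"
    by blast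
  have "0 \<in> {0..L}"
    using x by simp
  then have "H 0 = 0"
    using eq[of 0] by (simp add: H_def)
  then have "H x = 0"
    using k[OF x] k[OF \<open>0 \<in> {0..L}\<close>] by simp
  then show ?thesis
    by (simp add: H_def)
qed

lemma indefinite_integral_eq_0_if_linear_ode:
  assumes d: "d \<in> L2 L"
    and ode: "AE x in lborel. x \<in> {0<..<L} \<longrightarrow> d x = c * (LINT t:{0..x}|lborel. d t)"
    and x: "x \<in> {0..L}"
  shows "(LINT t:{0..x}|lborel. d t) = 0"
proof -
  define F where "F = (\<lambda>x. LINT t:{0..x}|lborel. d t)"
  have F_cont: "continuous_on {0..L} F"
    unfolding F_def by (rule L2_indefinite_integral_continuous[OF d])
  have F_integral: "F y = integral {0..y} d" if "y \<in> {0..L}" for y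
    using set_borel_integral_eq_integral(2)[OF L2_set_integrable_subinterval[OF d]] that
    by (auto simp: F_def)
  obtain N where N: "N \<in> null_sets lborel" "\<And>y. y \<notin> N \<Longrightarrow> y \<in> {0<..<L} \<Longrightarrow> d y = c * F y"
    using ode unfolding F_def by (auto simp: eventually_ae_filter)
  have "negligible N"
    using N(1) by (simp add: negligible_iff_null_sets null_sets_completionI)
  then have "negligible (N \<union> {0, L})"
    by (rule negligible_Un) simp
  then have "F y = integral {0..y} (\<lambda>t. c * F t)" if "y \<in> {0..L}" for y
    unfolding F_integral[OF that] by (rule integral_spike) (use N(2) that in auto)
  then have "F x = 0"
    by (rule linear_integral_equation_eq_0[OF F_cont _ x])
  then show ?thesis
    by (simp add: F_def)
qed

section \<open>The integral operator with a square integrable kernel\<close>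

definition square_integrable_kernel :: "real \<Rightarrow> (real \<Rightarrow> real \<Rightarrow> complex) \<Rightarrow> bool" where
  "square_integrable_kernel L g \<longleftrightarrow>
     (\<lambda>(x, y). g x y) \<in> borel_measurable (lborel \<Otimes>\<^sub>M lborel) \<and>
     set_integrable (lborel \<Otimes>\<^sub>M lborel) ({0<..<L} \<times> {0<..<L}) (\<lambda>(x, y). (cmod (g x y))\<^sup>2)"

definition kernel_adjoint :: "real \<Rightarrow> (real \<Rightarrow> real \<Rightarrow> complex) \<Rightarrow> (real \<Rightarrow> complex) \<Rightarrow> real \<Rightarrow> complex" where
  "kernel_adjoint L g z = (\<lambda>x. LINT y:{0<..<L}|lborel. cnj (g y x) * z y)"

definition kernel_column_sqnorm :: "real \<Rightarrow> (real \<Rightarrow> real \<Rightarrow> complex) \<Rightarrow> real \<Rightarrow> ennreal" where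
  "kernel_column_sqnorm L g x =
     (\<integral>\<^sup>+ y. ennreal (indicator ({0<..<L} \<times> {0<..<L}) (y, x) * (cmod (g y x))\<^sup>2) \<partial>lborel)"

lemma As_eq_kernel_adjoint: "As L g z = (\<lambda>x. (-1) * dz L z x + 1 * kernel_adjoint L g z x)"
  by (simp add: As_def kernel_adjoint_def)

context
  fixes L :: real and g :: "real \<Rightarrow> real \<Rightarrow> complex"
  assumes g: "square_integrable_kernel L g"
begin

lemma kernel_measurable [measurable]:
  "(\<lambda>p. g (fst p) (snd p)) \<in> borel_measurable (lborel \<Otimes>\<^sub>M lborel)"
  using g by (simp add: square_integrable_kernel_def case_prod_beta')

lemma kernel_transpose_measurable [measurable]:
  "(\<lambda>p. g (snd p) (fst p)) \<in> borel_measurable (lborel \<Otimes>\<^sub>M lborel)"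
proof -
  have "(\<lambda>p. (\<lambda>q. g (fst q) (snd q)) (snd p, fst p)) \<in> borel_measurable (lborel \<Otimes>\<^sub>M lborel)"
    by measurable
  then show ?thesis
    by simp
qed

lemma kernel_column_measurable [measurable]: "(\<lambda>y. g y x) \<in> borel_measurable lborel"
proof -
  have "(\<lambda>y. (\<lambda>q. g (fst q) (snd q)) (y, x)) \<in> borel_measurable lborel"
    by measurable
  then show ?thesis
    by simp
qed

lemma kernel_column_sqnorm_measurable: "kernel_column_sqnorm L g \<in> borel_measurable lborel"
proof -
  have "(\<lambda>p. ennreal (indicator ({0<..<L} \<times> {0<..<L}) (snd p, fst p) * (cmod (g (snd p) (fst p)))\<^sup>2))
      \<in> borel_measurable (lborel \<Otimes>\<^sub>M lborel)"
    by measurable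
  from lborel.borel_measurable_nn_integral_fst[OF this] show ?thesis
    by (simp add: kernel_column_sqnorm_def[abs_def])
qed

lemma nn_integral_kernel_column_sqnorm_finite:
  "(\<integral>\<^sup>+ x. kernel_column_sqnorm L g x \<partial>lborel) < \<infinity>"
proof -
  define I where "I = {0<..<L} \<times> {0<..<L}"
  have meas: "(\<lambda>p. ennreal (indicator I p * (cmod (g (fst p) (snd p)))\<^sup>2)) \<in> borel_measurable (lborel \<Otimes>\<^sub>M lborel)"
    unfolding I_def by measurable
  have "(\<integral>\<^sup>+ x. kernel_column_sqnorm L g x \<partial>lborel)
      = (\<integral>\<^sup>+ p. ennreal (indicator I p * (cmod (g (fst p) (snd p)))\<^sup>2) \<partial>(lborel \<Otimes>\<^sub>M lborel))"
    using lborel_pair.nn_integral_snd[OF meas] by (simp add: kernel_column_sqnorm_def I_def)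
  also have "\<dots> = (\<integral>\<^sup>+ p. ennreal (norm (indicator I p *\<^sub>R (case p of (x, y) \<Rightarrow> (cmod (g x y))\<^sup>2)))
      \<partial>(lborel \<Otimes>\<^sub>M lborel))"
    by (intro nn_integral_cong) (auto simp: indicator_def split: prod.splits)
  also have "\<dots> < \<infinity>"
    using g unfolding square_integrable_kernel_def set_integrable_def I_def
    by (simp add: integrable_iff_bounded)
  finally show ?thesis .
qed

lemma AE_kernel_column_L2: "AE x in lborel. x \<in> {0<..<L} \<longrightarrow> (\<lambda>y. cnj (g y x)) \<in> L2 L"
proof -
  have "AE x in lborel. kernel_column_sqnorm L g x \<noteq> \<infinity>"
    using nn_integral_kernel_column_sqnorm_finite
    by (intro nn_integral_noteq_infinite[OF kernel_column_sqnorm_measurable]) simp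
  then show ?thesis
  proof eventually_elim
  case (elim x)
  show ?case
  proof
    assume x: "x \<in> {0<..<L}"
    have "integrable lborel (\<lambda>y. indicator {0<..<L} y *\<^sub>R (cmod (cnj (g y x)))\<^sup>2)"
    proof (subst integrable_iff_bounded, intro conjI)
      show "(\<lambda>y. indicator {0<..<L} y *\<^sub>R (cmod (cnj (g y x)))\<^sup>2) \<in> borel_measurable lborel"
        by measurable
      show "(\<integral>\<^sup>+ y. ennreal (norm (indicator {0<..<L} y *\<^sub>R (cmod (cnj (g y x)))\<^sup>2)) \<partial>lborel) < \<infinity>"
        using elim x by (simp add: kernel_column_sqnorm_def indicator_def top.not_eq_extremum)
    qed
    then show "(\<lambda>y. cnj (g y x)) \<in> L2 L"
      by (simp add: L2_def set_integrable_def)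
  qed
  qed
qed

lemma kernel_adjoint_sqnorm_le:
  assumes z: "z \<in> L2 L"
  shows "ennreal (indicator {0<..<L} x * (cmod (kernel_adjoint L g z x))\<^sup>2)
    \<le> kernel_column_sqnorm L g x * (\<integral>\<^sup>+ y. ennreal (indicator {0<..<L} y * (cmod (z y))\<^sup>2) \<partial>lborel)"
proof (cases "x \<in> {0<..<L}")
  case x: True
  define I where "I = {0<..<L}"
  have [measurable]: "z \<in> borel_measurable lborel"
    using L2_measurable[OF z] .
  have "ennreal (cmod (kernel_adjoint L g z x))
      \<le> (\<integral>\<^sup>+ y. ennreal (indicator I y * cmod (g y x)) * ennreal (indicator I y * cmod (z y)) \<partial>lborel)"
  proof (cases "integrable lborel (\<lambda>y. indicator I y *\<^sub>R (cnj (g y x) * z y))")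
    case True
    have "ennreal (cmod (kernel_adjoint L g z x))
        \<le> (\<integral>\<^sup>+ y. ennreal (norm (indicator I y *\<^sub>R (cnj (g y x) * z y))) \<partial>lborel)"
      unfolding kernel_adjoint_def set_lebesgue_integral_def I_def
      by (rule integral_norm_bound_ennreal[OF True[unfolded I_def]])
    also have "\<dots> = (\<integral>\<^sup>+ y. ennreal (indicator I y * cmod (g y x)) * ennreal (indicator I y * cmod (z y)) \<partial>lborel)"
      by (intro nn_integral_cong) (auto simp: indicator_def norm_mult ennreal_mult[symmetric])
    finally show ?thesis .
  next
    case False
    then have "kernel_adjoint L g z x = 0"
      unfolding kernel_adjoint_def set_lebesgue_integral_def I_def by (rule not_integrable_integral_eq)
    then show ?thesis
      by simp
  qed
  then have "(ennreal (cmod (kernel_adjoint L g z x)))\<^sup>2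
      \<le> (\<integral>\<^sup>+ y. ennreal (indicator I y * cmod (g y x)) * ennreal (indicator I y * cmod (z y)) \<partial>lborel)\<^sup>2"
    by (rule power_mono) simp
  also have "\<dots> \<le> (\<integral>\<^sup>+ y. (ennreal (indicator I y * cmod (g y x)))\<^sup>2 \<partial>lborel)
      * (\<integral>\<^sup>+ y. (ennreal (indicator I y * cmod (z y)))\<^sup>2 \<partial>lborel)"
    by (rule Cauchy_Schwarz_nn_integral) (unfold I_def, measurable)
  also have "\<dots> = kernel_column_sqnorm L g x * (\<integral>\<^sup>+ y. ennreal (indicator I y * (cmod (z y))\<^sup>2) \<partial>lborel)"
    unfolding kernel_column_sqnorm_def using x
    by (intro arg_cong2[where f="(*)"] nn_integral_cong) (auto simp: indicator_def ennreal_power I_def)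
  finally show ?thesis
    using x by (simp add: ennreal_power I_def)
qed simp

lemma kernel_adjoint_L2:
  assumes z: "z \<in> L2 L"
  shows "kernel_adjoint L g z \<in> L2 L"
proof -
  define Z where "Z = (\<integral>\<^sup>+ y. ennreal (indicator {0<..<L} y * (cmod (z y))\<^sup>2) \<partial>lborel)"
  have [measurable]: "z \<in> borel_measurable lborel"
    using L2_measurable[OF z] .
  have meas: "kernel_adjoint L g z \<in> borel_measurable lborel"
  proof -
    have "(\<lambda>(x, y). indicator {0<..<L} y *\<^sub>R (cnj (g y x) * z y)) \<in> borel_measurable (lborel \<Otimes>\<^sub>M lborel)"
      by measurable
    then show ?thesis
      unfolding kernel_adjoint_def[abs_def] set_lebesgue_integral_def
      by (rule lborel.borel_measurable_lebesgue_integral)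
  qed
  have "Z < \<infinity>"
    using L2_square_integrable[OF z] unfolding Z_def set_integrable_def
    by (simp add: integrable_iff_bounded)
  have "(\<integral>\<^sup>+ x. ennreal (indicator {0<..<L} x * (cmod (kernel_adjoint L g z x))\<^sup>2) \<partial>lborel)
      \<le> (\<integral>\<^sup>+ x. kernel_column_sqnorm L g x * Z \<partial>lborel)"
    using kernel_adjoint_sqnorm_le[OF z] unfolding Z_def by (rule nn_integral_mono)
  also have "\<dots> = (\<integral>\<^sup>+ x. kernel_column_sqnorm L g x \<partial>lborel) * Z"
    by (rule nn_integral_multc[OF kernel_column_sqnorm_measurable])
  also have "\<dots> < \<infinity>"
    using nn_integral_kernel_column_sqnorm_finite \<open>Z < \<infinity>\<close> by (simp add: ennreal_mult_less_top)
  finally have "integrable lborel (\<lambda>x. indicator {0<..<L} x *\<^sub>R (cmod (kernel_adjoint L g z x))\<^sup>2)"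
    using meas by (subst integrable_iff_bounded) (simp add: indicator_def)
  then show ?thesis
    using meas by (simp add: L2_def set_integrable_def)
qed

lemma kernel_adjoint_lincomb:
  assumes z: "z1 \<in> L2 L" "z2 \<in> L2 L"
  shows "aeq L (kernel_adjoint L g (\<lambda>x. a * z1 x + b * z2 x))
    (\<lambda>x. a * kernel_adjoint L g z1 x + b * kernel_adjoint L g z2 x)"
  using AE_kernel_column_L2 unfolding aeq_def
proof eventually_elim
  case (elim x)
  show ?case
  proof
    assume x: "x \<in> {0<..<L}"
    then have "(\<lambda>y. cnj (g y x)) \<in> L2 L"
      using elim by simp
    then have "set_integrable lborel {0<..<L} (\<lambda>y. cnj (g y x) * z1 y)"
      "set_integrable lborel {0<..<L} (\<lambda>y. cnj (g y x) * z2 y)"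
      using L2_mult_cnj_set_integrable[OF _ L2_cnj[OF z(1)]]
        L2_mult_cnj_set_integrable[OF _ L2_cnj[OF z(2)]] by simp_all
    then show "kernel_adjoint L g (\<lambda>x. a * z1 x + b * z2 x) x
        = a * kernel_adjoint L g z1 x + b * kernel_adjoint L g z2 x"
      unfolding kernel_adjoint_def by (simp add: distrib_left mult.left_commute set_integral_add)
  qed
qed

end

lemma dz_is_deriv0: "DAs L z \<Longrightarrow> is_deriv0 L z (dz L z)"
  unfolding DAs_def dz_def by (metis someI)

lemma dz_L2: "DAs L z \<Longrightarrow> dz L z \<in> L2 L"
  using dz_is_deriv0[of L z] by (simp add: is_deriv0_def)

lemma DAs_L2: "DAs L z \<Longrightarrow> z \<in> L2 L"
  by (simp add: DAs_def)

lemma is_deriv0_lincomb: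
  assumes "is_deriv0 L z1 w1" "is_deriv0 L z2 w2"
  shows "is_deriv0 L (\<lambda>x. a * z1 x + b * z2 x) (\<lambda>x. a * w1 x + b * w2 x)"
proof -
  have w: "w1 \<in> L2 L" "w2 \<in> L2 L"
    using assms by (simp_all add: is_deriv0_def)
  have "AE x in lborel. x \<in> {0<..<L} \<longrightarrow> z1 x = (LINT t:{0..x}|lborel. w1 t)"
    "AE x in lborel. x \<in> {0<..<L} \<longrightarrow> z2 x = (LINT t:{0..x}|lborel. w2 t)"
    using assms by (simp_all add: is_deriv0_def)
  then have "AE x in lborel. x \<in> {0<..<L} \<longrightarrow>
      a * z1 x + b * z2 x = (LINT t:{0..x}|lborel. a * w1 t + b * w2 t)"
  proof eventually_elim
    case (elim x)
    show ?case
    proof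
      assume x: "x \<in> {0<..<L}"
      then have "set_integrable lborel {0..x} w1" "set_integrable lborel {0..x} w2"
        by (auto intro!: L2_set_integrable_subinterval w)
      then show "a * z1 x + b * z2 x = (LINT t:{0..x}|lborel. a * w1 t + b * w2 t)"
        using elim x by (simp add: set_integral_add)
    qed
  qed
  then show ?thesis
    using L2_lincomb[OF w] by (simp add: is_deriv0_def)
qed

lemma is_deriv0_unique:
  assumes "0 < L" "is_deriv0 L z1 w1" "is_deriv0 L z2 w2" "aeq L z1 z2"
  shows "aeq L w1 w2"
proof -
  have d: "is_deriv0 L (\<lambda>x. 1 * z1 x + (-1) * z2 x) (\<lambda>x. 1 * w1 x + (-1) * w2 x)"
    using assms(2,3) by (rule is_deriv0_lincomb)
  have "AE x in lborel. x \<in> {0<..<L} \<longrightarrow>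
      1 * z1 x + (-1) * z2 x = (LINT t:{0..x}|lborel. 1 * w1 t + (-1) * w2 t)"
    using d by (simp add: is_deriv0_def)
  then have "AE x in lborel. x \<in> {0<..<L} \<longrightarrow> (LINT t:{0..x}|lborel. 1 * w1 t + (-1) * w2 t) = 0"
    using assms(4) unfolding aeq_def by eventually_elim auto
  with \<open>0 < L\<close> have "aeq L (\<lambda>x. 1 * w1 x + (-1) * w2 x) (\<lambda>_. 0)"
    using d by (intro aeq_0_if_indefinite_integral_AE_eq_0) (simp_all add: is_deriv0_def)
  then show ?thesis
    unfolding aeq_def by eventually_elim auto
qed

lemma DAs_lincomb: "DAs L z1 \<Longrightarrow> DAs L z2 \<Longrightarrow> DAs L (\<lambda>x. a * z1 x + b * z2 x)"
  unfolding DAs_def using is_deriv0_lincomb L2_lincomb by blast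

lemma dz_lincomb:
  assumes "0 < L" "DAs L z1" "DAs L z2"
  shows "aeq L (dz L (\<lambda>x. a * z1 x + b * z2 x)) (\<lambda>x. a * dz L z1 x + b * dz L z2 x)"
  using \<open>0 < L\<close> dz_is_deriv0[OF DAs_lincomb[OF assms(2,3)]]
    is_deriv0_lincomb[OF dz_is_deriv0[OF assms(2)] dz_is_deriv0[OF assms(3)]] aeq_refl
  by (rule is_deriv0_unique)

lemma is_deriv0_zero: "is_deriv0 L (\<lambda>_. 0) (\<lambda>_. 0)"
  by (simp add: is_deriv0_def L2_zero)

lemma DAs_if_aeq_0:
  assumes "z \<in> L2 L" "aeq L z (\<lambda>_. 0)"
  shows "DAs L z"
proof -
  have "is_deriv0 L z (\<lambda>_. 0)"
    using assms(2) by (simp add: is_deriv0_def aeq_def L2_zero)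
  with assms(1) show ?thesis
    unfolding DAs_def by blast
qed

lemma dz_aeq_0: "0 < L \<Longrightarrow> DAs L z \<Longrightarrow> aeq L z (\<lambda>_. 0) \<Longrightarrow> aeq L (dz L z) (\<lambda>_. 0)"
  by (rule is_deriv0_unique[OF _ dz_is_deriv0 is_deriv0_zero])

lemma Bs_eq_0_if_aeq_0:
  assumes "0 < L" and z: "DAs L z" and "aeq L z (\<lambda>_. 0)"
  shows "Bs L z = 0"
proof -
  have "AE x in lborel. x \<in> {0<..<L} \<longrightarrow> z x = (LINT t:{0..x}|lborel. dz L z t)"
    using dz_is_deriv0[OF z] by (simp add: is_deriv0_def)
  then have "AE x in lborel. x \<in> {0<..<L} \<longrightarrow> (LINT t:{0..x}|lborel. dz L z t) = 0"
    using \<open>aeq L z (\<lambda>_. 0)\<close> unfolding aeq_def by eventually_elim auto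
  then show ?thesis
    unfolding Bs_def using \<open>0 < L\<close>
    by (intro continuous_on_eq_0_if_AE_eq_0[OF _ L2_indefinite_integral_continuous[OF dz_L2[OF z]]]) auto
qed

context
  fixes L :: real and g :: "real \<Rightarrow> real \<Rightarrow> complex"
  assumes L: "0 < L" and g: "square_integrable_kernel L g"
begin

lemma As_L2: "DAs L z \<Longrightarrow> As L g z \<in> L2 L"
  unfolding As_eq_kernel_adjoint by (intro L2_lincomb dz_L2 kernel_adjoint_L2[OF g] DAs_L2)

lemma As_lincomb:
  assumes z: "DAs L z1" "DAs L z2"
  shows "aeq L (As L g (\<lambda>x. a * z1 x + b * z2 x)) (\<lambda>x. a * As L g z1 x + b * As L g z2 x)"
proof -
  have "aeq L (As L g (\<lambda>x. a * z1 x + b * z2 x))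
      (\<lambda>x. (-1) * (a * dz L z1 x + b * dz L z2 x)
         + 1 * (a * kernel_adjoint L g z1 x + b * kernel_adjoint L g z2 x))"
    unfolding As_eq_kernel_adjoint
    by (rule aeq_lincomb[OF dz_lincomb[OF L z] kernel_adjoint_lincomb[OF g DAs_L2[OF z(1)] DAs_L2[OF z(2)]]])
  then show ?thesis
    unfolding As_eq_kernel_adjoint by (simp add: algebra_simps)
qed

end

lemma sum_fun_apply: "(\<Sum>i\<in>A. h i) x = (\<Sum>i\<in>A. h i x)"
  by (induction A rule: infinite_finite_induct) auto

lemma vector_space_fun: "vector_space (\<lambda>(c::'k::field) (f::'a \<Rightarrow> 'k) x. c * f x)"
  by unfold_locales (auto simp: fun_eq_iff algebra_simps)

lemma lincomb_family_dependent:
  fixes F :: "('a \<Rightarrow> 'k::field) set" and r :: "nat \<Rightarrow> 'a \<Rightarrow> 'k"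
  assumes F: "finite F" and span: "\<And>i. \<exists>c. r i = (\<lambda>x. \<Sum>f\<in>F. c f * f x)" and n: "card F \<le> n"
  shows "\<exists>a. (\<exists>i\<le>n. a i \<noteq> 0) \<and> (\<forall>x. (\<Sum>i\<le>n. a i * r i x) = 0)"
proof -
  interpret fun_space: vector_space "\<lambda>(c::'k) (f::'a \<Rightarrow> 'k) x. c * f x"
    by (rule vector_space_fun)
  show ?thesis
  proof (cases "inj_on r {..n}")
    case False
    then obtain i j where ij: "i \<le> n" "j \<le> n" "i \<noteq> j" "r i = r j"
      unfolding inj_on_def by auto
    define a :: "nat \<Rightarrow> 'k" where "a k = (if k = i then 1 else if k = j then -1 else 0)" for k
    have "(\<Sum>k\<le>n. a k * r k x) = (\<Sum>k\<in>{i, j}. a k * r k x)" for x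
      by (rule sum.mono_neutral_right) (use ij in \<open>auto simp: a_def\<close>)
    then have "(\<Sum>k\<le>n. a k * r k x) = 0" for x
      using ij by (simp add: a_def)
    moreover have "a i \<noteq> 0"
      by (simp add: a_def)
    ultimately show ?thesis
      using ij by blast
  next
    case True
    define V where "V = r ` {..n}"
    have "r i \<in> fun_space.span F" for i
    proof -
      obtain c where "r i = (\<lambda>x. \<Sum>f\<in>F. c f * f x)"
        using span by blast
      then have "r i = (\<Sum>f\<in>F. (\<lambda>x. c f * f x))"
        by (simp add: fun_eq_iff sum_fun_apply)
      also have "\<dots> \<in> fun_space.span F"
        by (intro fun_space.span_sum) (metis fun_space.span_base fun_space.span_scale)
      finally show ?thesis .
    qed
    then have "V \<subseteq> fun_space.span F"
      by (auto simp: V_def)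
    then have "card V \<le> card F" if "fun_space.independent V"
      using fun_space.independent_span_bound[OF F that] by blast
    moreover have "card V = Suc n"
      unfolding V_def using card_image[OF True] by simp
    ultimately have "\<not> fun_space.independent V"
      using n by linarith
    moreover have "finite V"
      by (simp add: V_def)
    ultimately obtain u where u: "\<exists>v\<in>V. u v \<noteq> 0" "(\<Sum>v\<in>V. (\<lambda>x. u v * v x)) = 0"
      using fun_space.dependent_finite by blast
    have "(\<Sum>k\<le>n. u (r k) * r k x) = 0" for x
    proof -
      have "(\<Sum>k\<le>n. u (r k) * r k x) = (\<Sum>v\<in>V. (\<lambda>x. u v * v x)) x"
        unfolding V_def by (simp add: sum.reindex[OF True] sum_fun_apply)
      then show ?thesis
        using u(2) by simp
    qed
    moreover have "\<exists>i\<le>n. u (r i) \<noteq> 0"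
      using u(1) by (auto simp: V_def)
    ultimately show ?thesis
      by (intro exI[where x="\<lambda>k. u (r k)"]) blast
  qed
qed

lemma kerop_L2: "z \<in> kerop L Ps \<Longrightarrow> z \<in> L2 L"
  by (simp add: kerop_def)

context
  fixes L :: real and P Ps :: "(real \<Rightarrow> complex) \<Rightarrow> real \<Rightarrow> complex"
  assumes P: "bounded_op L P" and Ps: "is_adjoint L P Ps"
begin

lemma kerop_lincomb:
  assumes "z1 \<in> kerop L Ps" "z2 \<in> kerop L Ps"
  shows "(\<lambda>x. a * z1 x + b * z2 x) \<in> kerop L Ps"
proof -
  have z: "z1 \<in> L2 L" "z2 \<in> L2 L"
    using assms by (simp_all add: kerop_L2)
  have "aeq L (Ps (\<lambda>x. a * z1 x + b * z2 x)) (\<lambda>x. a * Ps z1 x + b * Ps z2 x)"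
    by (rule adjoint_lincomb[OF P Ps z])
  moreover have "aeq L (\<lambda>x. a * Ps z1 x + b * Ps z2 x) (\<lambda>x. a * 0 + b * 0)"
    using assms by (intro aeq_lincomb) (simp_all add: kerop_def)
  ultimately have "aeq L (Ps (\<lambda>x. a * z1 x + b * z2 x)) (\<lambda>_. 0)"
    by (simp add: aeq_trans)
  then show ?thesis
    using L2_lincomb[OF z] by (simp add: kerop_def)
qed

lemma kerop_zero: "(\<lambda>_. 0) \<in> kerop L Ps"
  using adjoint_lincomb[OF P Ps L2_zero L2_zero, of 0 0] by (simp add: kerop_def L2_zero)

lemma kerop_sum:
  "finite A \<Longrightarrow> (\<And>i. i \<in> A \<Longrightarrow> f i \<in> kerop L Ps) \<Longrightarrow> (\<lambda>x. \<Sum>i\<in>A. c i * f i x) \<in> kerop L Ps"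
proof (induction A rule: finite_induct)
  case empty
  then show ?case
    using kerop_zero by simp
next
  case (insert j A)
  then have "(\<lambda>x. c j * f j x + 1 * (\<Sum>i\<in>A. c i * f i x)) \<in> kerop L Ps"
    by (intro kerop_lincomb) auto
  with insert show ?case
    by simp
qed

end

locale adjoint_intertwining =
  fixes L :: real and g :: "real \<Rightarrow> real \<Rightarrow> complex"
    and P Ps :: "(real \<Rightarrow> complex) \<Rightarrow> real \<Rightarrow> complex"
  assumes L_pos: "0 < L" and kernel: "square_integrable_kernel L g"
    and bounded: "bounded_op L P" and adjoint: "is_adjoint L P Ps"
    and Ps_DAs: "\<And>z. DAs L z \<Longrightarrow> DAs L (Ps z)"
    and intertwining: "\<And>z. z \<in> kerBs L \<Longrightarrow> aeq L (\<lambda>x. A0s L (Ps z) x - Ps (As L g z) x) (\<lambda>_. 0)"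
begin

text \<open>By the intertwining relation, \<open>w = P\<^sup>* z\<close> satisfies \<open>w' = - \<lambda> w\<close> and \<open>w(0) = 0\<close>.\<close>

lemma Ps_aeq_0_if_eigenvector:
  assumes z: "z \<in> kerBs L" and eig: "aeq L (\<lambda>x. lam * z x - As L g z x) (\<lambda>_. 0)"
  shows "aeq L (Ps z) (\<lambda>_. 0)"
proof -
  have zD: "DAs L z"
    using z by (simp add: kerBs_def)
  have zL: "z \<in> L2 L"
    by (rule DAs_L2[OF zD])
  define w where "w = Ps z"
  define d where "d = dz L w"
  have wD: "DAs L w"
    unfolding w_def by (rule Ps_DAs[OF zD])
  have d: "d \<in> L2 L"
    unfolding d_def by (rule dz_L2[OF wD])
  have w: "AE x in lborel. x \<in> {0<..<L} \<longrightarrow> w x = (LINT t:{0..x}|lborel. d t)"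
    using dz_is_deriv0[OF wD] by (simp add: is_deriv0_def d_def)
  have "aeq L (As L g z) (\<lambda>x. lam * z x + 0 * z x)"
    using eig unfolding aeq_def by eventually_elim auto
  then have "aeq L (Ps (As L g z)) (Ps (\<lambda>x. lam * z x + 0 * z x))"
    using adjoint_cong[OF bounded adjoint As_L2[OF L_pos kernel zD] L2_lincomb[OF zL zL]] by blast
  moreover have "aeq L (Ps (\<lambda>x. lam * z x + 0 * z x)) (\<lambda>x. lam * w x + 0 * w x)"
    unfolding w_def by (rule adjoint_lincomb[OF bounded adjoint zL zL])
  moreover have "aeq L (\<lambda>x. - d x - Ps (As L g z) x) (\<lambda>_. 0)"
    using intertwining[OF z] by (simp add: A0s_def d_def w_def)
  ultimately have "AE x in lborel. x \<in> {0<..<L} \<longrightarrow> - d x = lam * (LINT t:{0..x}|lborel. d t)"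
    using w unfolding aeq_def by eventually_elim (auto simp: algebra_simps)
  then have "AE x in lborel. x \<in> {0<..<L} \<longrightarrow> d x = (- lam) * (LINT t:{0..x}|lborel. d t)"
    by eventually_elim (metis minus_minus mult_minus_left)
  then have integral_0: "(LINT t:{0..x}|lborel. d t) = 0" if "x \<in> {0..L}" for x
    using indefinite_integral_eq_0_if_linear_ode[OF d _ that] by blast
  from w show ?thesis
    unfolding aeq_def w_def[symmetric] by eventually_elim (simp add: integral_0)
qed

lemma As_kerop:
  assumes sub: "kerop L Ps \<subseteq> kerBs L" and z: "z \<in> kerop L Ps"
  shows "As L g z \<in> kerop L Ps"
proof -
  have zB: "z \<in> kerBs L"
    using sub z by blast
  then have zD: "DAs L z"
    by (simp add: kerBs_def)
  have "aeq L (dz L (Ps z)) (\<lambda>_. 0)"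
    using z by (intro dz_aeq_0[OF L_pos Ps_DAs[OF zD]]) (simp add: kerop_def)
  with intertwining[OF zB] have "aeq L (Ps (As L g z)) (\<lambda>_. 0)"
    unfolding aeq_def A0s_def by eventually_elim auto
  then show ?thesis
    using As_L2[OF L_pos kernel zD] by (simp add: kerop_def)
qed

end

section \<open>Polynomials in the adjoint operator\<close>

definition poly_As :: "real \<Rightarrow> (real \<Rightarrow> real \<Rightarrow> complex) \<Rightarrow> complex poly \<Rightarrow> (real \<Rightarrow> complex) \<Rightarrow> real \<Rightarrow> complex"
  where "poly_As L g p z = (\<lambda>x. \<Sum>i\<le>degree p. coeff p i * (As L g ^^ i) z x)"

locale kerop_in_kerBs = adjoint_intertwining +
  assumes kerop_subset: "kerop L Ps \<subseteq> kerBs L"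
begin

lemma kerop_DAs: "z \<in> kerop L Ps \<Longrightarrow> DAs L z"
  using kerop_subset by (auto simp: kerBs_def)

lemma As_power_kerop: "z \<in> kerop L Ps \<Longrightarrow> (As L g ^^ i) z \<in> kerop L Ps"
  by (induction i) (auto intro: As_kerop[OF kerop_subset])

lemma poly_As_kerop: "z \<in> kerop L Ps \<Longrightarrow> poly_As L g p z \<in> kerop L Ps"
  unfolding poly_As_def by (intro kerop_sum[OF bounded adjoint] As_power_kerop) auto

lemma As_sum_aeq:
  "finite A \<Longrightarrow> (\<And>i. i \<in> A \<Longrightarrow> f i \<in> kerop L Ps) \<Longrightarrow>
    aeq L (As L g (\<lambda>x. \<Sum>i\<in>A. c i * f i x)) (\<lambda>x. \<Sum>i\<in>A. c i * As L g (f i) x)"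
proof (induction A rule: finite_induct)
  case empty
  have "DAs L (\<lambda>_. 0)"
    by (rule kerop_DAs[OF kerop_zero[OF bounded adjoint]])
  from As_lincomb[OF L_pos kernel this this, of 0 0] show ?case
    by simp
next
  case (insert j A)
  have "DAs L (f j)" "DAs L (\<lambda>x. \<Sum>i\<in>A. c i * f i x)"
    using insert by (auto intro!: kerop_DAs kerop_sum[OF bounded adjoint])
  from As_lincomb[OF L_pos kernel this, of "c j" 1]
  have "aeq L (As L g (\<lambda>x. c j * f j x + 1 * (\<Sum>i\<in>A. c i * f i x)))
      (\<lambda>x. c j * As L g (f j) x + 1 * As L g (\<lambda>x. \<Sum>i\<in>A. c i * f i x) x)" .
  also have "aeq L \<dots> (\<lambda>x. c j * As L g (f j) x + 1 * (\<Sum>i\<in>A. c i * As L g (f i) x))"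
    using insert by (intro aeq_lincomb[OF aeq_refl]) simp
  finally show ?case
    using insert by simp
qed

lemma poly_As_linear_factor:
  assumes z: "z \<in> kerop L Ps" and q: "q \<noteq> 0"
  shows "aeq L (poly_As L g ([:-a, 1:] * q) z)
    (\<lambda>x. As L g (poly_As L g q z) x - a * poly_As L g q z x)"
proof -
  define T where "T = (\<lambda>i. (As L g ^^ i) z)"
  define d where "d = degree q"
  have deg: "degree ([:-a, 1:] * q) = Suc d"
    using q by (subst degree_mult_eq) (simp_all add: d_def)
  have coeff: "coeff ([:-a, 1:] * q) i = - a * coeff q i + (case i of 0 \<Rightarrow> 0 | Suc j \<Rightarrow> coeff q j)" for i
    by (simp add: coeff_pCons split: nat.splits)
  have q_sum: "poly_As L g q z = (\<lambda>x. \<Sum>i\<le>d. coeff q i * T i x)"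
    by (simp add: poly_As_def T_def d_def)
  have lhs: "poly_As L g ([:-a, 1:] * q) z x = (\<Sum>i\<le>d. coeff q i * T (Suc i) x) - a * poly_As L g q z x" for x
  proof -
    have "poly_As L g ([:-a, 1:] * q) z x
        = (\<Sum>i\<le>Suc d. (- a * coeff q i) * T i x + (case i of 0 \<Rightarrow> 0 | Suc j \<Rightarrow> coeff q j) * T i x)"
      unfolding poly_As_def deg T_def by (intro sum.cong refl) (simp only: coeff distrib_right)
    also have "\<dots> = - a * (\<Sum>i\<le>Suc d. coeff q i * T i x)
        + (\<Sum>i\<le>Suc d. (case i of 0 \<Rightarrow> 0 | Suc j \<Rightarrow> coeff q j) * T i x)"
      by (simp only: sum.distrib sum_distrib_left mult.assoc)
    also have "(\<Sum>i\<le>Suc d. coeff q i * T i x) = poly_As L g q z x"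
      by (simp add: q_sum d_def coeff_eq_0)
    also have "(\<Sum>i\<le>Suc d. (case i of 0 \<Rightarrow> 0 | Suc j \<Rightarrow> coeff q j) * T i x) = (\<Sum>i\<le>d. coeff q i * T (Suc i) x)"
      by (subst sum.atMost_Suc_shift) simp
    finally show ?thesis
      by simp
  qed
  have "aeq L (As L g (poly_As L g q z)) (\<lambda>x. \<Sum>i\<le>d. coeff q i * As L g (T i) x)"
    unfolding q_sum by (rule As_sum_aeq) (simp_all add: T_def As_power_kerop z)
  from aeq_sym[OF this] have "aeq L (\<lambda>x. \<Sum>i\<le>d. coeff q i * T (Suc i) x) (As L g (poly_As L g q z))"
    by (simp add: T_def)
  then have "aeq L (\<lambda>x. 1 * (\<Sum>i\<le>d. coeff q i * T (Suc i) x) + (- a) * poly_As L g q z x)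
      (\<lambda>x. 1 * As L g (poly_As L g q z) x + (- a) * poly_As L g q z x)"
    by (rule aeq_lincomb[OF _ aeq_refl])
  moreover have "poly_As L g ([:-a, 1:] * q) z
      = (\<lambda>x. (\<Sum>i\<le>d. coeff q i * T (Suc i) x) - a * poly_As L g q z x)"
    using lhs by (rule ext)
  ultimately show ?thesis
    by simp
qed

lemma aeq_0_if_poly_As_aeq_0:
  assumes no_eigenvector: "\<And>lam z. z \<in> kerBs L \<Longrightarrow> aeq L (\<lambda>x. lam * z x - As L g z x) (\<lambda>_. 0) \<Longrightarrow> aeq L z (\<lambda>_. 0)"
  shows "p \<noteq> 0 \<Longrightarrow> y \<in> kerop L Ps \<Longrightarrow> aeq L (poly_As L g p y) (\<lambda>_. 0) \<Longrightarrow> aeq L y (\<lambda>_. 0)"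
proof (induction "degree p" arbitrary: p y rule: less_induct)
  case less
  show ?case
  proof (cases "degree p = 0")
    case True
    then obtain c where p: "p = [:c:]"
      by (metis degree_eq_zeroE)
    with less.prems have c: "c \<noteq> 0" and "aeq L (\<lambda>x. c * y x) (\<lambda>_. 0)"
      by (simp_all add: poly_As_def)
    from this(2) show ?thesis
      unfolding aeq_def by eventually_elim (simp add: c)
  next
    case False
    then have "\<not> constant (poly p)"
      by (simp add: constant_degree)
    then obtain a where "poly p a = 0"
      using fundamental_theorem_of_algebra by blast
    then obtain q where pq: "p = [:-a, 1:] * q"
      by (auto simp: poly_eq_0_iff_dvd elim: dvdE)
    with less.prems(1) have q: "q \<noteq> 0"
      by auto
    then have deg: "degree q < degree p"
      unfolding pq by (subst degree_mult_eq) auto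
    define u where "u = poly_As L g q y"
    have u: "u \<in> kerop L Ps"
      unfolding u_def by (rule poly_As_kerop[OF less.prems(2)])
    have "aeq L (\<lambda>x. As L g u x - a * u x) (\<lambda>_. 0)"
      using aeq_trans[OF aeq_sym[OF poly_As_linear_factor[OF less.prems(2) q]] less.prems(3)[unfolded pq]]
      unfolding u_def .
    then have "aeq L (\<lambda>x. a * u x - As L g u x) (\<lambda>_. 0)"
      unfolding aeq_def by eventually_elim (simp add: algebra_simps)
    then have "aeq L u (\<lambda>_. 0)"
      using no_eigenvector u kerop_subset by blast
    then show ?thesis
      using less.hyps[OF deg q less.prems(2)] by (simp add: u_def)
  qed
qed

lemma poly_As_annihilator:
  assumes fin: "fin_dim L (kerop L Ps)" and y: "y \<in> kerop L Ps"
  shows "\<exists>p. p \<noteq> 0 \<and> aeq L (poly_As L g p y) (\<lambda>_. 0)"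
proof -
  obtain F where F: "finite F" "F \<subseteq> kerop L Ps"
    and span: "\<And>z. z \<in> kerop L Ps \<Longrightarrow> \<exists>c. aeq L z (\<lambda>x. \<Sum>f\<in>F. c f * f x)"
    using fin unfolding fin_dim_def by blast
  define n where "n = card F"
  define T where "T = (\<lambda>i. (As L g ^^ i) y)"
  have "\<exists>c. aeq L (T i) (\<lambda>x. \<Sum>f\<in>F. c f * f x)" for i
    unfolding T_def using span As_power_kerop[OF y] by blast
  then obtain C where C: "\<And>i. aeq L (T i) (\<lambda>x. \<Sum>f\<in>F. C i f * f x)"
    by metis
  define r where "r = (\<lambda>i x. \<Sum>f\<in>F. C i f * f x)"
  obtain a where a: "\<exists>i\<le>n. a i \<noteq> 0" "\<And>x. (\<Sum>i\<le>n. a i * r i x) = 0"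
    using lincomb_family_dependent[OF F(1), of r n] unfolding r_def n_def by blast
  define p where "p = (\<Sum>i\<le>n. monom (a i) i)"
  have coeff_p: "coeff p i = (if i \<le> n then a i else 0)" for i
    unfolding p_def by (simp add: coeff_sum coeff_monom)
  have "p \<noteq> 0"
    using a(1) coeff_p by (metis coeff_0)
  have "degree p \<le> n"
    using coeff_p by (intro degree_le) auto
  moreover have "a i = 0" if "degree p < i" "i \<le> n" for i
    using coeff_p[of i] coeff_eq_0[OF that(1)] that(2) by simp
  ultimately have "poly_As L g p y = (\<lambda>x. \<Sum>i\<le>n. a i * T i x)"
    unfolding poly_As_def T_def
    by (intro ext sum.mono_neutral_cong_left) (auto simp: coeff_p)
  moreover have "aeq L (\<lambda>x. \<Sum>i\<le>n. a i * T i x) (\<lambda>x. \<Sum>i\<le>n. a i * r i x)"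
    by (rule aeq_sum) (simp_all add: C r_def)
  ultimately have "aeq L (poly_As L g p y) (\<lambda>_. 0)"
    using a(2) by simp
  with \<open>p \<noteq> 0\<close> show ?thesis
    by blast
qed

end

context adjoint_intertwining
begin

lemma conditions_if_kerop_trivial:
  assumes trivial: "\<forall>z\<in>kerop L Ps. aeq L z (\<lambda>_. 0)"
  shows "(\<forall>z\<in>kerop L Ps. DAs L z) \<and> kerop L Ps \<subseteq> kerBs L \<and> fin_dim L (kerop L Ps) \<and>
    (\<forall>lam::complex. \<forall>z\<in>kerBs L. aeq L (\<lambda>x. lam * z x - As L g z x) (\<lambda>_. 0) \<longrightarrow> aeq L z (\<lambda>_. 0))"
proof (intro conjI ballI allI impI subsetI)
  fix z assume z: "z \<in> kerop L Ps"
  then have "aeq L z (\<lambda>_. 0)"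
    using trivial by blast
  moreover from z have "z \<in> L2 L"
    by (rule kerop_L2)
  ultimately show D: "DAs L z"
    by (rule DAs_if_aeq_0[rotated])
  with \<open>aeq L z (\<lambda>_. 0)\<close> show "z \<in> kerBs L"
    using Bs_eq_0_if_aeq_0[OF L_pos D] by (simp add: kerBs_def)
next
  show "fin_dim L (kerop L Ps)"
    using trivial unfolding fin_dim_def by (intro exI[of _ "{}"]) simp
next
  fix lam z assume z: "z \<in> kerBs L" and eig: "aeq L (\<lambda>x. lam * z x - As L g z x) (\<lambda>_. 0)"
  have "aeq L (Ps z) (\<lambda>_. 0)"
    by (rule Ps_aeq_0_if_eigenvector[OF z eig])
  moreover have "z \<in> L2 L"
    using z by (simp add: kerBs_def DAs_L2)
  ultimately have "z \<in> kerop L Ps"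
    by (simp add: kerop_def)
  then show "aeq L z (\<lambda>_. 0)"
    using trivial by blast
qed

lemma kerop_trivial_if_conditions:
  assumes sub: "kerop L Ps \<subseteq> kerBs L" and fin: "fin_dim L (kerop L Ps)"
    and no_eigenvector: "\<forall>lam::complex. \<forall>z\<in>kerBs L.
      aeq L (\<lambda>x. lam * z x - As L g z x) (\<lambda>_. 0) \<longrightarrow> aeq L z (\<lambda>_. 0)"
  shows "\<forall>z\<in>kerop L Ps. aeq L z (\<lambda>_. 0)"
proof
  interpret kerop_in_kerBs L g P Ps
    using adjoint_intertwining_axioms sub by (rule kerop_in_kerBs.intro[OF _ kerop_in_kerBs_axioms.intro])
  fix y assume y: "y \<in> kerop L Ps"
  obtain p where p: "p \<noteq> 0" "aeq L (poly_As L g p y) (\<lambda>_. 0)"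
    using poly_As_annihilator[OF fin y] by blast
  show "aeq L y (\<lambda>_. 0)"
    by (rule aeq_0_if_poly_As_aeq_0[OF _ p(1) y p(2)]) (use no_eigenvector in blast)
qed

end

theorem lemma2:
  fixes L :: real and g :: "real \<Rightarrow> real \<Rightarrow> complex"
    and P Ps :: "(real \<Rightarrow> complex) \<Rightarrow> (real \<Rightarrow> complex)"
  assumes "L > 0"
    and "(\<lambda>(x, y). g x y) \<in> borel_measurable (lborel \<Otimes>\<^sub>M lborel)"
    and "set_integrable (lborel \<Otimes>\<^sub>M lborel) ({0<..<L} \<times> {0<..<L}) (\<lambda>(x, y). (cmod (g x y))\<^sup>2)"
    and "bounded_op L P"
    and "is_adjoint L P Ps"
    and "\<forall>z. DAs L z \<longrightarrow> DAs L (Ps z)"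
    and "\<forall>z\<in>kerBs L. aeq L (\<lambda>x. A0s L (Ps z) x - Ps (As L g z) x) (\<lambda>_. 0)"
  shows "(\<forall>z\<in>kerop L Ps. aeq L z (\<lambda>_. 0)) \<longleftrightarrow>
           ((\<forall>z\<in>kerop L Ps. DAs L z) \<and>
            kerop L Ps \<subseteq> kerBs L \<and>
            fin_dim L (kerop L Ps) \<and>
            (\<forall>lam::complex. \<forall>z\<in>kerBs L.
                aeq L (\<lambda>x. lam * z x - As L g z x) (\<lambda>_. 0) \<longrightarrow> aeq L z (\<lambda>_. 0)))"
proof -
  have "square_integrable_kernel L g"
    unfolding square_integrable_kernel_def using assms(2,3) by (rule conjI)
  with assms interpret adjoint_intertwining L g P Ps
    by (intro adjoint_intertwining.intro) blast+
  show ?thesis (is "?trivial \<longleftrightarrow> ?conditions")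
  proof
    show ?conditions if ?trivial
      using that by (rule conditions_if_kerop_trivial)
    show ?trivial if ?conditions
      using that by (intro kerop_trivial_if_conditions) blast+
  qed
qed

end
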